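(* Let $V:[0,\infty)\to\mathbb{R}$ be càdlàg with finite variation on compact intervals, let $f:\mathbb{R}\to\mathbb{R}$ be of class $\mathcal{C}^1$, and let $t>0$. Then $\ell^x(t)$ is well defined (finite) for every simple level $x$, hence for Lebesgue-almost every $x$. The function $x\mapsto\ell^x(t)$ is measurable, $x\mapsto f'(x)\ell^x(t)$ is Lebesgue integrable, and $$f(V(t))-f(V(0))=\int_{\mathbb{R}} f'(x)\,\ell^x(t)\,{\rm d}x+\sum_{0<s\le t}\big(f(V(s))-f(V(s-))\big).$$
   Context: $V(s-)$ is the left limit and $\Delta V(s)=V(s)-V(s-)$. A level $x\in\mathbb{R}$ is simple for $V$ if two conditions hold. First, the set $\{t>0: V(t-)<x<V(t)\text{ or }V(t)<x<V(t-)\text{ or }V(t)=x\}$ is discrete. Second, there is no $t>0$ with $\Delta V(t)\ne0$ and $x\in\{V(t),V(t-)\}$. Non-simple levels form a Lebesgue-null set. We write $t\in\mathcal{I}(x)$ (i.e. $V$ increases through level $x$ at time $t$) if two conditions hold. First, $V(t)=x$ and $V$ is continuous at $t$. Second, there is $\delta>0$ such that for all $s\ge0$ with $0<|s-t|<\delta$, $V(s)-V(t)$ has the same strict sign as $s-t$. We write $t\in\mathcal{D}(x)$ (i.e. $V$ decreases through level $x$ at time $t$) if $-V$ increases through $-x$ at time $t$. Finally $\ell^x(t)=\mathrm{Card}((0,t]\cap\mathcal{I}(x))-\mathrm{Card}((0,t]\cap\mathcal{D}(x))$. *)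

theory Defs
  imports "HOL-Analysis.Analysis"
begin

definition vleft :: "(real \<Rightarrow> real) \<Rightarrow> real \<Rightarrow> real" where
  "vleft V s = Lim (at_left s) V"

definition cadlag :: "(real \<Rightarrow> real) \<Rightarrow> bool" where
  "cadlag V \<longleftrightarrow> (\<forall>s\<ge>0. continuous (at_right s) V) \<and>
                 (\<forall>s>0. \<exists>L. (V \<longlongrightarrow> L) (at_left s))"

definition bounded_variation_on :: "(real \<Rightarrow> real) \<Rightarrow> real \<Rightarrow> real \<Rightarrow> bool" where
  "bounded_variation_on V a b \<longleftrightarrow>
     (\<exists>B. \<forall>(n::nat) (p::nat \<Rightarrow> real).
        a \<le> p 0 \<and> p n \<le> b \<and> (\<forall>i<n. p i \<le> p (Suc i)) \<longrightarrow>
        (\<Sum>i<n. \<bar>V (p (Suc i)) - V (p i)\<bar>) \<le> B)"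

definition finite_variation :: "(real \<Rightarrow> real) \<Rightarrow> bool" where
  "finite_variation V \<longleftrightarrow> (\<forall>T\<ge>0. bounded_variation_on V 0 T)"

definition crossing_times :: "(real \<Rightarrow> real) \<Rightarrow> real \<Rightarrow> real set" where
  "crossing_times V x = {t. t > 0 \<and> ((vleft V t < x \<and> x < V t) \<or> (V t < x \<and> x < vleft V t) \<or> V t = x)}"

text \<open>Simple level. "Discrete" is read as: no accumulation point in [0,infinity),
  i.e. finitely many points in every bounded interval.\<close>
definition simple_level :: "(real \<Rightarrow> real) \<Rightarrow> real \<Rightarrow> bool" where
  "simple_level V x \<longleftrightarrow>
     (\<forall>T. finite (crossing_times V x \<inter> {0..T})) \<and>
     \<not> (\<exists>t>0. V t - vleft V t \<noteq> 0 \<and> (x = V t \<or> x = vleft V t))"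

definition incr_through :: "(real \<Rightarrow> real) \<Rightarrow> real \<Rightarrow> real \<Rightarrow> bool" where
  "incr_through V x t \<longleftrightarrow> V t = x \<and> continuous (at t within {0..}) V \<and>
     (\<exists>\<delta>>0. \<forall>s\<ge>0. 0 < \<bar>s - t\<bar> \<and> \<bar>s - t\<bar> < \<delta> \<longrightarrow> sgn (V s - V t) = sgn (s - t))"

definition decr_through :: "(real \<Rightarrow> real) \<Rightarrow> real \<Rightarrow> real \<Rightarrow> bool" where
  "decr_through V x t \<longleftrightarrow> incr_through (\<lambda>s. - V s) (- x) t"

definition upcross_set :: "(real \<Rightarrow> real) \<Rightarrow> real \<Rightarrow> real \<Rightarrow> real set" where
  "upcross_set V x t = {s \<in> {0<..t}. incr_through V x s}"

definition downcross_set :: "(real \<Rightarrow> real) \<Rightarrow> real \<Rightarrow> real \<Rightarrow> real set" where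
  "downcross_set V x t = {s \<in> {0<..t}. decr_through V x s}"

text \<open>Local time ell^x(t) (meaningful when both sets are finite).\<close>
definition ell :: "(real \<Rightarrow> real) \<Rightarrow> real \<Rightarrow> real \<Rightarrow> int" where
  "ell V x t = int (card (upcross_set V x t)) - int (card (downcross_set V x t))"

end

theory Submission
  imports Defs
begin

text \<open>
  For a simple level \<open>x\<close> the finitely many crossing times in \<open>(0, t]\<close> can be swept from
  left to right: between them \<open>V\<close> stays on one side of \<open>x\<close>, and at each of them the indicator of
  \<open>x < V\<close> changes by \<open>+1\<close> at an up-crossing, by \<open>-1\<close> at a down-crossing, and by the signed
  indicator of \<open>x\<close> lying between \<open>V(s-)\<close> and \<open>V(s)\<close> at a jump. Hence \<open>ell V x t\<close> equals
  \<open>1{x < V t} - 1{x < V 0}\<close> minus the sum of these jump indicators; integrating against \<open>f'\<close>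
  (fundamental theorem of calculus on each interval, dominated convergence over the summable
  jumps) gives the formula.

  Almost every level is simple: local extremum values and jump end points form countable sets,
  and a level crossed infinitely often in \<open>[0, T]\<close> is crossed arbitrarily often by the dyadic
  approximations of \<open>V\<close>. Their crossing counts (Banach's indicator) have integrals bounded by
  the total variation, so by Fatou's lemma this happens only on a null set.
\<close>

section \<open>Sweeping across the crossings of a cadlag path\<close>

lemma finite_gap_below:
  fixes A :: "real set"
  assumes "finite A" and "0 < \<tau>"
  obtains r where "0 < r" "r < \<tau>" "\<And>s. s \<in> A \<Longrightarrow> s < \<tau> \<Longrightarrow> s < r"
proof -
  define c where "c = Max (insert 0 {s\<in>A. s < \<tau>})"
  have fin: "finite (insert 0 {s\<in>A. s < \<tau>})" using assms(1) by auto
  have "c \<in> insert 0 {s\<in>A. s < \<tau>}" unfolding c_def using fin by (rule Max_in) simp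
  hence "0 \<le> c" "c < \<tau>" using assms(2) fin by (auto simp: c_def)
  moreover have "\<And>s. s \<in> A \<Longrightarrow> s < \<tau> \<Longrightarrow> s \<le> c" using fin by (auto simp: c_def)
  ultimately show ?thesis by (intro that[of "(c + \<tau>) / 2"]) fastforce+
qed

lemma vleft_eqI: "s > 0 \<Longrightarrow> (V \<longlongrightarrow> L) (at_left s) \<Longrightarrow> vleft V s = L"
  unfolding vleft_def by (rule tendsto_Lim[OF trivial_limit_at_left_real])

lemma crossing_times_uminus:
  assumes "\<And>s. s > 0 \<Longrightarrow> vleft (\<lambda>r. - V r) s = - vleft V s"
  shows "crossing_times (\<lambda>r. - V r) (- x) = crossing_times V x"
  unfolding crossing_times_def using assms by auto

lemma incr_through_iff_sides:
  assumes "0 \<le> r'" "r' < \<tau>" "\<tau> < r" and "V \<tau> = x" and "isCont V \<tau>"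
    and left: "\<And>s. r' \<le> s \<Longrightarrow> s < \<tau> \<Longrightarrow> (V s < x \<longleftrightarrow> V r' < x) \<and> V s \<noteq> x"
    and right: "\<And>s. \<tau> < s \<Longrightarrow> s \<le> r \<Longrightarrow> (V s < x \<longleftrightarrow> V r < x) \<and> V s \<noteq> x"
  shows "incr_through V x \<tau> \<longleftrightarrow> V r' < x \<and> x < V r"
proof
  assume "incr_through V x \<tau>"
  then obtain d where d: "d > 0"
    "\<And>s. s \<ge> 0 \<Longrightarrow> 0 < \<bar>s - \<tau>\<bar> \<Longrightarrow> \<bar>s - \<tau>\<bar> < d \<Longrightarrow> sgn (V s - x) = sgn (s - \<tau>)"
    using \<open>V \<tau> = x\<close> unfolding incr_through_def by blast
  define s1 where "s1 = \<tau> - min d (\<tau> - r') / 2"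
  define s2 where "s2 = \<tau> + min d (r - \<tau>) / 2"
  have s12: "r' \<le> s1" "s1 < \<tau>" "\<tau> - s1 < d" "\<tau> < s2" "s2 \<le> r" "s2 - \<tau> < d"
    using assms(1-3) d(1) by (auto simp: s1_def s2_def min_def field_simps)
  have "sgn (V s1 - x) = -1" "sgn (V s2 - x) = 1"
    using d(2)[of s1] d(2)[of s2] s12 assms(1) by auto
  hence "V s1 < x" "V s2 > x" by (auto simp: sgn_if split: if_splits)
  with s12 show "V r' < x \<and> x < V r" using left[of s1] right[of s2] right[of r] assms(3) by auto
next
  assume sides: "V r' < x \<and> x < V r"
  have "sgn (V s - x) = sgn (s - \<tau>)" if "0 < \<bar>s - \<tau>\<bar>" "\<bar>s - \<tau>\<bar> < min (\<tau> - r') (r - \<tau>)" for s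
  proof (cases "s < \<tau>")
    case True
    thus ?thesis using left[of s] sides that by (simp add: sgn_if)
  next
    case False
    thus ?thesis using right[of s] sides that by (simp add: sgn_if)
  qed
  thus "incr_through V x \<tau>"
    unfolding incr_through_def using assms(1-5)
    by (intro conjI exI[of _ "min (\<tau> - r') (r - \<tau>)"])
       (auto intro: continuous_at_imp_continuous_at_within)
qed

text \<open>The change of the indicator of \<open>x < V\<close> at a crossing time \<open>\<tau>\<close>: the first two terms are
  counted by \<open>ell\<close>, the last one records a jump across \<open>x\<close>.\<close>
definition crossing_weight :: "(real \<Rightarrow> real) \<Rightarrow> real \<Rightarrow> real \<Rightarrow> int" where
  "crossing_weight V x \<tau> = of_bool (incr_through V x \<tau>) - of_bool (decr_through V x \<tau>)
     + (of_bool (x < V \<tau>) - of_bool (x < vleft V \<tau>))"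

definition net_crossings :: "(real \<Rightarrow> real) \<Rightarrow> real \<Rightarrow> real \<Rightarrow> int" where
  "net_crossings V x r = (\<Sum>\<tau>\<in>crossing_times V x \<inter> {0<..r}. crossing_weight V x \<tau>)"

lemma net_crossings_eq_ell_plus_jumps:
  assumes "finite (crossing_times V x \<inter> {0..t})"
  shows "net_crossings V x t = ell V x t +
    (\<Sum>\<tau>\<in>crossing_times V x \<inter> {0<..t}. of_bool (x < V \<tau>) - of_bool (x < vleft V \<tau>))"
proof -
  define K where "K = crossing_times V x \<inter> {0<..t}"
  have "finite K" unfolding K_def by (rule finite_subset[OF _ assms]) auto
  have "upcross_set V x t = K \<inter> {\<tau>. incr_through V x \<tau>}" "downcross_set V x t = K \<inter> {\<tau>. decr_through V x \<tau>}"
    by (auto simp: K_def upcross_set_def downcross_set_def crossing_times_def incr_through_def decr_through_def)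
  thus ?thesis
    using \<open>finite K\<close> unfolding net_crossings_def crossing_weight_def ell_def K_def[symmetric]
    by (simp add: sum.distrib sum_subtractf)
qed

locale cadlag_path =
  fixes V :: "real \<Rightarrow> real"
  assumes cadlag: "cadlag V"
begin

lemma tendsto_vleft: "s > 0 \<Longrightarrow> (V \<longlongrightarrow> vleft V s) (at_left s)"
  using cadlag unfolding cadlag_def by (metis vleft_eqI)

lemma tendsto_at_right: "s \<ge> 0 \<Longrightarrow> (V \<longlongrightarrow> V s) (at_right s)"
  using cadlag unfolding cadlag_def continuous_within by auto

lemma isCont_if_no_jump: "s > 0 \<Longrightarrow> vleft V s = V s \<Longrightarrow> isCont V s"
  unfolding isCont_def using tendsto_vleft[of s] tendsto_at_right[of s]
  by (auto intro: filterlim_split_at)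

lemma vleft_uminus: "s > 0 \<Longrightarrow> vleft (\<lambda>r. - V r) s = - vleft V s"
  by (intro vleft_eqI tendsto_minus tendsto_vleft)

lemma cadlag_uminus: "cadlag (\<lambda>r. - V r)"
  using cadlag tendsto_vleft unfolding cadlag_def by (auto intro: continuous_minus tendsto_minus)

lemma abs_vleft_le:
  assumes "s > 0" and "\<And>r. 0 < r \<Longrightarrow> r < s \<Longrightarrow> \<bar>V r\<bar> \<le> M"
  shows "\<bar>vleft V s\<bar> \<le> M"
proof -
  have "eventually (\<lambda>r. \<bar>V r\<bar> \<le> M) (at_left s)"
    unfolding eventually_at_left_field using assms by (intro exI[of _ 0]) auto
  thus ?thesis using tendsto_upperbound[OF tendsto_rabs[OF tendsto_vleft[OF assms(1)]]] by simp
qed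

lemma side_persists_right:
  assumes "s \<ge> 0" and "V s \<noteq> x"
  obtains d where "d > 0" "\<And>r. s \<le> r \<Longrightarrow> r < s + d \<Longrightarrow> (V r < x \<longleftrightarrow> V s < x) \<and> V r \<noteq> x"
proof -
  have "eventually (\<lambda>r. (V r < x \<longleftrightarrow> V s < x) \<and> V r \<noteq> x) (at_right s)"
  proof (cases "V s < x")
    case True
    show ?thesis using order_tendstoD(2)[OF tendsto_at_right[OF assms(1)] True]
      by eventually_elim (use True in auto)
  next
    case False
    hence "V s > x" using assms(2) by auto
    show ?thesis using order_tendstoD(1)[OF tendsto_at_right[OF assms(1)] \<open>V s > x\<close>]
      by eventually_elim (use False in auto)
  qed
  then obtain b where "b > s" "\<And>r. s < r \<Longrightarrow> r < b \<Longrightarrow> (V r < x \<longleftrightarrow> V s < x) \<and> V r \<noteq> x"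
    unfolding eventually_at_right_field by blast
  thus ?thesis using assms(2) by (intro that[of "b - s"]) (auto simp: le_less)
qed

lemma side_persists_left:
  assumes "s > 0" and "vleft V s \<noteq> x"
  obtains d where "d > 0"
    "\<And>r. s - d < r \<Longrightarrow> r < s \<Longrightarrow> (V r < x \<longleftrightarrow> vleft V s < x) \<and> V r \<noteq> x"
proof -
  have "eventually (\<lambda>r. (V r < x \<longleftrightarrow> vleft V s < x) \<and> V r \<noteq> x) (at_left s)"
  proof (cases "vleft V s < x")
    case True
    show ?thesis using order_tendstoD(2)[OF tendsto_vleft[OF assms(1)] True]
      by eventually_elim (use True in auto)
  next
    case False
    hence "vleft V s > x" using assms(2) by auto
    show ?thesis using order_tendstoD(1)[OF tendsto_vleft[OF assms(1)] \<open>vleft V s > x\<close>]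
      by eventually_elim (use False in auto)
  qed
  then obtain b where "b < s" "\<And>r. b < r \<Longrightarrow> r < s \<Longrightarrow> (V r < x \<longleftrightarrow> vleft V s < x) \<and> V r \<noteq> x"
    unfolding eventually_at_left_field by blast
  thus ?thesis by (intro that[of "s - b"]) auto
qed

text \<open>The first time after \<open>a\<close> at which \<open>V \<ge> x\<close> would be a crossing time: there either
  \<open>V = x\<close>, or \<open>V\<close> jumps over \<open>x\<close> from a left limit that cannot equal \<open>x\<close>.\<close>
lemma stays_below_without_crossings:
  assumes no_jump_from: "\<And>\<tau>. \<tau> > 0 \<Longrightarrow> V \<tau> \<noteq> vleft V \<tau> \<Longrightarrow> vleft V \<tau> \<noteq> x"
    and "0 \<le> a" "V a < x"
    and no_crossing: "\<And>\<tau>. a < \<tau> \<Longrightarrow> \<tau> \<le> b \<Longrightarrow> \<tau> \<notin> crossing_times V x"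
    and "a \<le> s" "s \<le> b"
  shows "V s < x"
proof (rule ccontr)
  assume "\<not> V s < x"
  define A where "A = {r\<in>{a..b}. x \<le> V r}"
  define \<tau> where "\<tau> = Inf A"
  have "s \<in> A" using assms(5,6) \<open>\<not> V s < x\<close> by (auto simp: A_def)
  have "bdd_below A" unfolding A_def by (rule bdd_belowI[of _ a]) auto
  hence lower: "\<And>r. r \<in> A \<Longrightarrow> \<tau> \<le> r" by (simp add: \<tau>_def cInf_lower)
  have greatest: "e \<le> \<tau>" if "\<And>r. a \<le> r \<Longrightarrow> r < e \<Longrightarrow> V r < x" for e
    unfolding \<tau>_def using \<open>s \<in> A\<close> that by (intro cInf_greatest) (force simp: A_def not_less[symmetric])+
  obtain d where "d > 0" "\<And>r. a \<le> r \<Longrightarrow> r < a + d \<Longrightarrow> V r < x"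
    using side_persists_right[OF assms(2)] assms(3) by (metis less_irrefl)
  hence "a < \<tau>" using greatest[of "a + d"] by auto
  have "\<tau> \<le> b" using lower[OF \<open>s \<in> A\<close>] assms(6) by simp
  have below: "V r < x" if "a \<le> r" "r < \<tau>" for r
    using lower[of r] that \<open>\<tau> \<le> b\<close> by (force simp: A_def)
  have "x \<le> V \<tau>"
  proof (rule ccontr)
    assume "\<not> x \<le> V \<tau>"
    then obtain d' where "d' > 0" "\<And>r. \<tau> \<le> r \<Longrightarrow> r < \<tau> + d' \<Longrightarrow> V r < x"
      using side_persists_right[of \<tau> x] \<open>a < \<tau>\<close> assms(2) by (metis less_eq_real_def not_le order_trans)
    with below have "\<tau> + d' \<le> \<tau>" by (intro greatest) (metis not_le)
    thus False using \<open>d' > 0\<close> by simp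
  qed
  have "\<tau> > 0" using \<open>a < \<tau>\<close> assms(2) by simp
  have "vleft V \<tau> \<le> x"
  proof -
    have "eventually (\<lambda>r. V r \<le> x) (at_left \<tau>)"
      unfolding eventually_at_left_field using \<open>a < \<tau>\<close> below
      by (intro exI[of _ a]) (auto intro: less_imp_le)
    thus ?thesis using tendsto_upperbound[OF tendsto_vleft[OF \<open>\<tau> > 0\<close>]] by simp
  qed
  hence "\<tau> \<in> crossing_times V x"
    using \<open>x \<le> V \<tau>\<close> \<open>\<tau> > 0\<close> no_jump_from[OF \<open>\<tau> > 0\<close>] by (auto simp: crossing_times_def)
  thus False using no_crossing \<open>a < \<tau>\<close> \<open>\<tau> \<le> b\<close> by blast
qed

lemma side_constant_without_crossings:
  assumes no_jump_from: "\<And>\<tau>. \<tau> > 0 \<Longrightarrow> V \<tau> \<noteq> vleft V \<tau> \<Longrightarrow> vleft V \<tau> \<noteq> x"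
    and "0 \<le> a" "V a \<noteq> x"
    and no_crossing: "\<And>\<tau>. a < \<tau> \<Longrightarrow> \<tau> \<le> b \<Longrightarrow> \<tau> \<notin> crossing_times V x"
    and "a \<le> s" "s \<le> b"
  shows "(V s < x \<longleftrightarrow> V a < x) \<and> V s \<noteq> x"
proof (cases "V a < x")
  case True
  thus ?thesis using stays_below_without_crossings[OF assms(1,2) True assms(4-6)] by simp
next
  case False
  interpret neg: cadlag_path "\<lambda>r. - V r" by (rule cadlag_path.intro[OF cadlag_uminus])
  have "- V a < - x" using False assms(3) by simp
  moreover have "vleft (\<lambda>r. - V r) \<tau> \<noteq> - x" if "\<tau> > 0" "- V \<tau> \<noteq> vleft (\<lambda>r. - V r) \<tau>" for \<tau>
    using no_jump_from[of \<tau>] that by (simp add: vleft_uminus)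
  ultimately have "- V s < - x"
    using assms(2-6) crossing_times_uminus[of V x, OF vleft_uminus]
    by (intro neg.stays_below_without_crossings[of "-x" a b s]) auto
  thus ?thesis using False by simp
qed

lemma crossing_weight_eq:
  assumes no_jump_at: "\<And>\<tau>. \<tau> > 0 \<Longrightarrow> V \<tau> \<noteq> vleft V \<tau> \<Longrightarrow> x \<noteq> V \<tau> \<and> x \<noteq> vleft V \<tau>"
    and "0 \<le> r'" "r' < \<tau>" "\<tau> \<le> r" and "\<tau> \<in> crossing_times V x" and "V r \<noteq> x"
    and left: "\<And>s. r' \<le> s \<Longrightarrow> s < \<tau> \<Longrightarrow> (V s < x \<longleftrightarrow> V r' < x) \<and> V s \<noteq> x"
    and right: "\<And>s. \<tau> < s \<Longrightarrow> s \<le> r \<Longrightarrow> (V s < x \<longleftrightarrow> V r < x) \<and> V s \<noteq> x"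
    and at: "V \<tau> \<noteq> x \<Longrightarrow> (V \<tau> < x \<longleftrightarrow> V r < x)"
  shows "crossing_weight V x \<tau> = of_bool (x < V r) - of_bool (x < V r')"
proof -
  have "\<tau> > 0" using assms(2,3) by simp
  have "V r' \<noteq> x" using left[of r'] assms(3) by simp
  show ?thesis
  proof (cases "V \<tau> = x")
    case True
    have "vleft V \<tau> = V \<tau>" using no_jump_at[OF \<open>\<tau> > 0\<close>] True by metis
    hence cont: "isCont V \<tau>" using isCont_if_no_jump \<open>\<tau> > 0\<close> by blast
    have "\<tau> < r" using True assms(4,6) by (cases "\<tau> = r") auto
    have incr: "incr_through V x \<tau> \<longleftrightarrow> V r' < x \<and> x < V r"
      using assms(2,3) \<open>\<tau> < r\<close> True cont left right by (rule incr_through_iff_sides)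
    have "incr_through (\<lambda>s. - V s) (- x) \<tau> \<longleftrightarrow> - V r' < - x \<and> - x < - V r"
    proof (rule incr_through_iff_sides)
      show "isCont (\<lambda>s. - V s) \<tau>" using cont by (rule isCont_minus)
      show "(- V s < - x \<longleftrightarrow> - V r' < - x) \<and> - V s \<noteq> - x" if "r' \<le> s" "s < \<tau>" for s
        using left[OF that] \<open>V r' \<noteq> x\<close> by auto
      show "(- V s < - x \<longleftrightarrow> - V r < - x) \<and> - V s \<noteq> - x" if "\<tau> < s" "s \<le> r" for s
        using right[OF that] assms(6) by auto
    qed (use assms(2,3) \<open>\<tau> < r\<close> True in auto)
    hence decr: "decr_through V x \<tau> \<longleftrightarrow> x < V r' \<and> V r < x" by (simp add: decr_through_def)
    show ?thesis
      unfolding crossing_weight_def incr decr using True \<open>vleft V \<tau> = V \<tau>\<close> \<open>V r' \<noteq> x\<close> assms(6)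
      by auto
  next
    case False
    hence "\<not> incr_through V x \<tau>" "\<not> decr_through V x \<tau>"
      by (auto simp: incr_through_def decr_through_def)
    have "vleft V \<tau> \<noteq> x" using assms(5) False by (auto simp: crossing_times_def)
    then obtain d where d: "d > 0"
      "\<And>s. \<tau> - d < s \<Longrightarrow> s < \<tau> \<Longrightarrow> (V s < x \<longleftrightarrow> vleft V \<tau> < x) \<and> V s \<noteq> x"
      using side_persists_left[OF \<open>\<tau> > 0\<close>] by blast
    define s where "s = max r' (\<tau> - d / 2)"
    have "r' \<le> s" "s < \<tau>" "\<tau> - d < s" using d(1) assms(3) by (auto simp: s_def)
    hence "x < vleft V \<tau> \<longleftrightarrow> x < V r'"
      using d(2)[of s] left[of s] \<open>vleft V \<tau> \<noteq> x\<close> \<open>V r' \<noteq> x\<close> by auto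
    moreover have "x < V \<tau> \<longleftrightarrow> x < V r" using at False assms(6) by auto
    ultimately show ?thesis
      unfolding crossing_weight_def using \<open>\<not> incr_through V x \<tau>\<close> \<open>\<not> decr_through V x \<tau>\<close> by simp
  qed
qed

lemma net_crossings_last_step:
  assumes no_jump_at: "\<And>\<tau>. \<tau> > 0 \<Longrightarrow> V \<tau> \<noteq> vleft V \<tau> \<Longrightarrow> x \<noteq> V \<tau> \<and> x \<noteq> vleft V \<tau>"
    and fin: "finite (crossing_times V x \<inter> {0<..r})" and nonempty: "crossing_times V x \<inter> {0<..r} \<noteq> {}"
    and "V r \<noteq> x"
  obtains r' where "0 < r'" "r' < r" "V r' \<noteq> x"
    "card (crossing_times V x \<inter> {0<..r'}) < card (crossing_times V x \<inter> {0<..r})"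
    "net_crossings V x r = net_crossings V x r' + (of_bool (x < V r) - of_bool (x < V r'))"
proof -
  define K where "K = crossing_times V x"
  have off_K: "V s \<noteq> x" if "0 < s" "s \<notin> K" for s
    using that by (auto simp: K_def crossing_times_def)
  have same_side: "(V s < x \<longleftrightarrow> V a < x) \<and> V s \<noteq> x"
    if "0 \<le> a" "V a \<noteq> x" "\<And>q. a < q \<Longrightarrow> q \<le> b \<Longrightarrow> q \<notin> K" "a \<le> s" "s \<le> b" for a b s
    unfolding K_def using no_jump_at that(3)
    by (intro side_constant_without_crossings[OF _ that(1,2) _ that(4,5)]) (auto simp: K_def)
  define \<tau> where "\<tau> = Max (K \<inter> {0<..r})"
  have \<tau>: "\<tau> \<in> K" "0 < \<tau>" "\<tau> \<le> r"
    using Max_in[OF fin nonempty] by (auto simp: \<tau>_def K_def)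
  have after: "q \<notin> K" if "\<tau> < q" "q \<le> r" for q
    using Max_ge[OF fin, of q] that \<tau>(2) by (auto simp: \<tau>_def K_def)
  obtain r' where r': "0 < r'" "r' < \<tau>" "\<And>s. s \<in> K \<inter> {0<..r} \<Longrightarrow> s < \<tau> \<Longrightarrow> s < r'"
    using finite_gap_below[OF fin \<tau>(2)] unfolding K_def by blast
  have between: "q \<notin> K" if "r' < q" "q < \<tau>" for q
  proof
    assume "q \<in> K"
    hence "q < r'" using r'(3)[of q] that r'(1) \<tau>(3) by simp
    thus False using that(1) by simp
  qed
  have "V r' \<noteq> x" using off_K r'(1) r'(3)[of r'] r'(2) \<tau>(3) by auto
  have split: "K \<inter> {0<..r} = insert \<tau> (K \<inter> {0<..r'})"
  proof (intro equalityI subsetI)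
    fix s assume s: "s \<in> K \<inter> {0<..r}"
    hence "s \<le> \<tau>" using after[of s] by (cases "\<tau> < s") auto
    thus "s \<in> insert \<tau> (K \<inter> {0<..r'})" using r'(3)[OF s] s by (cases "s = \<tau>") auto
  qed (use \<tau> r' in auto)
  have fin': "finite (K \<inter> {0<..r'})" and "\<tau> \<notin> K \<inter> {0<..r'}"
    using fin r'(2) unfolding split K_def[symmetric] by auto
  have "crossing_weight V x \<tau> = of_bool (x < V r) - of_bool (x < V r')"
  proof (rule crossing_weight_eq[OF no_jump_at])
    show "(V s < x \<longleftrightarrow> V r' < x) \<and> V s \<noteq> x" if "r' \<le> s" "s < \<tau>" for s
      by (rule same_side) (use between that r'(1) \<open>V r' \<noteq> x\<close> in auto)
    show "(V s < x \<longleftrightarrow> V r < x) \<and> V s \<noteq> x" if "\<tau> < s" "s \<le> r" for s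
    proof -
      have "V s \<noteq> x" using off_K[of s] after[OF that] that \<tau>(2) by simp
      moreover have "q \<notin> K" if "s < q" "q \<le> r" for q
        using after \<open>\<tau> < s\<close> that by (meson less_trans)
      ultimately show ?thesis using same_side[of s r r] that \<tau>(2) by auto
    qed
    show "V \<tau> < x \<longleftrightarrow> V r < x" if "V \<tau> \<noteq> x"
      using same_side[of \<tau> r r, OF _ that after] \<tau> by simp
  qed (use \<open>V r \<noteq> x\<close> r' \<tau> in \<open>auto simp: K_def\<close>)
  moreover have "net_crossings V x r = net_crossings V x r' + crossing_weight V x \<tau>"
    unfolding net_crossings_def K_def[symmetric] split
    using fin' \<open>\<tau> \<notin> K \<inter> {0<..r'}\<close> by (simp add: add.commute)
  moreover have "card (K \<inter> {0<..r'}) < card (K \<inter> {0<..r})"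
    using fin' \<open>\<tau> \<notin> K \<inter> {0<..r'}\<close> unfolding split by simp
  ultimately show ?thesis
    using that[of r'] r'(1,2) \<tau>(3) \<open>V r' \<noteq> x\<close> unfolding K_def by simp
qed

lemma net_crossings_eq:
  assumes no_jump_at: "\<And>\<tau>. \<tau> > 0 \<Longrightarrow> V \<tau> \<noteq> vleft V \<tau> \<Longrightarrow> x \<noteq> V \<tau> \<and> x \<noteq> vleft V \<tau>"
    and finite: "finite (crossing_times V x \<inter> {0..t})" and "V 0 \<noteq> x"
    and "0 \<le> r" "r \<le> t" "V r \<noteq> x"
  shows "net_crossings V x r = of_bool (x < V r) - of_bool (x < V 0)"
  using assms(4-6)
proof (induction "card (crossing_times V x \<inter> {0<..r})" arbitrary: r rule: less_induct)
  case less
  have fin: "finite (crossing_times V x \<inter> {0<..r})"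
    by (rule finite_subset[OF _ finite]) (use less.prems in auto)
  show ?case
  proof (cases "crossing_times V x \<inter> {0<..r} = {}")
    case True
    hence "\<And>q. 0 < q \<Longrightarrow> q \<le> r \<Longrightarrow> q \<notin> crossing_times V x" by auto
    hence "V r < x \<longleftrightarrow> V 0 < x"
      using side_constant_without_crossings[OF _ order_refl \<open>V 0 \<noteq> x\<close> _ \<open>0 \<le> r\<close> order_refl]
        no_jump_at by blast
    thus ?thesis unfolding net_crossings_def True using \<open>V r \<noteq> x\<close> \<open>V 0 \<noteq> x\<close> by auto
  next
    case False
    then obtain r' where "0 < r'" "r' < r" "V r' \<noteq> x"
      "card (crossing_times V x \<inter> {0<..r'}) < card (crossing_times V x \<inter> {0<..r})"
      "net_crossings V x r = net_crossings V x r' + (of_bool (x < V r) - of_bool (x < V r'))"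
      using net_crossings_last_step[OF no_jump_at fin _ \<open>V r \<noteq> x\<close>] by blast
    thus ?thesis using less.hyps[of r'] less.prems by simp
  qed
qed

end

section \<open>Paths of finite variation\<close>

locale finite_variation_path = cadlag_path +
  assumes finite_variation: "finite_variation V"
begin

lemma variation_bound:
  assumes "T \<ge> 0"
  obtains B where "\<And>n p. 0 \<le> p 0 \<Longrightarrow> p n \<le> T \<Longrightarrow> (\<forall>i<n. p i \<le> p (Suc i)) \<Longrightarrow>
    (\<Sum>i<n. \<bar>V (p (Suc i)) - V (p i)\<bar>) \<le> B"
  using finite_variation assms unfolding finite_variation_def bounded_variation_on_def by blast

lemma bounded_on_interval:
  assumes "T \<ge> 0"
  obtains M where "\<And>s. 0 \<le> s \<Longrightarrow> s \<le> T \<Longrightarrow> \<bar>V s\<bar> \<le> M"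
proof -
  obtain B where B: "\<And>n p. 0 \<le> p 0 \<Longrightarrow> p n \<le> T \<Longrightarrow> (\<forall>i<n. p i \<le> p (Suc i)) \<Longrightarrow>
    (\<Sum>i<n. \<bar>V (p (Suc i)) - V (p i)\<bar>) \<le> B"
    using variation_bound[OF assms] by blast
  have "\<bar>V s\<bar> \<le> \<bar>V 0\<bar> + B" if "0 \<le> s" "s \<le> T" for s
    using B[of "\<lambda>i. if i = 0 then 0 else s" 1] that by simp
  thus ?thesis by (rule that)
qed

text \<open>The jump at the largest point \<open>m\<close> of \<open>F\<close> is captured by a last partition step from a
  point just before \<open>m\<close> to \<open>m\<close>.\<close>
lemma variation_approximates_jumps:
  assumes "finite F"
  shows "\<forall>b \<epsilon>. 0 \<le> b \<longrightarrow> F \<subseteq> {0<..b} \<longrightarrow> \<epsilon> > 0 \<longrightarrow>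
    (\<exists>n p. 0 \<le> p 0 \<and> p n \<le> b \<and> (\<forall>i<n. p i \<le> p (Suc i)) \<and>
       (\<Sum>s\<in>F. \<bar>V s - vleft V s\<bar>) - \<epsilon> \<le> (\<Sum>i<n. \<bar>V (p (Suc i)) - V (p i)\<bar>))"
  using assms
proof (induction rule: finite_linorder_max_induct)
  case empty
  show ?case by (intro allI impI exI[of _ 0] exI[of _ "\<lambda>_. 0"]) auto
next
  case (insert m A)
  show ?case
  proof (intro allI impI)
    fix b \<epsilon> :: real assume b: "0 \<le> b" "insert m A \<subseteq> {0<..b}" "\<epsilon> > 0"
    have "0 < m" "m \<le> b" using b by auto
    obtain d where d: "d < m" "\<And>r. d < r \<Longrightarrow> r < m \<Longrightarrow> \<bar>V r - vleft V m\<bar> < \<epsilon>/2"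
      using tendstoD[OF tendsto_vleft[OF \<open>0 < m\<close>], of "\<epsilon>/2"] b(3)
      unfolding eventually_at_left_field dist_real_def by auto
    obtain a where a: "0 < a" "d < a" "a < m" "A \<subseteq> {0<..a}"
    proof -
      obtain a' where "0 < a'" "a' < m" "\<And>s. s \<in> A \<Longrightarrow> s < m \<Longrightarrow> s < a'"
        using finite_gap_below[OF insert(1) \<open>0 < m\<close>] by blast
      thus ?thesis using insert(2) b(2) d(1)
        by (intro that[of "max a' ((d + m) / 2)"]) (auto simp: subset_eq less_max_iff_disj le_max_iff_disj less_imp_le)
    qed
    obtain n p where np: "0 \<le> p 0" "p n \<le> a" "\<forall>i<n. p i \<le> p (Suc i)"
      "(\<Sum>s\<in>A. \<bar>V s - vleft V s\<bar>) - \<epsilon>/2 \<le> (\<Sum>i<n. \<bar>V (p (Suc i)) - V (p i)\<bar>)"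
      using insert(3)[rule_format, of a "\<epsilon>/2"] a(1,4) b(3) by auto
    define q where "q i = (if i \<le> n then p i else if i = Suc n then a else m)" for i
    have "(\<Sum>i<n. \<bar>V (q (Suc i)) - V (q i)\<bar>) = (\<Sum>i<n. \<bar>V (p (Suc i)) - V (p i)\<bar>)"
      by (rule sum.cong) (auto simp: q_def)
    hence q_sum: "(\<Sum>i<Suc (Suc n). \<bar>V (q (Suc i)) - V (q i)\<bar>) =
       (\<Sum>i<n. \<bar>V (p (Suc i)) - V (p i)\<bar>) + \<bar>V a - V (p n)\<bar> + \<bar>V m - V a\<bar>"
      by (simp add: q_def)
    have "\<bar>V m - vleft V m\<bar> \<le> \<bar>V m - V a\<bar> + \<epsilon>/2" using d(2)[of a] a by linarith
    moreover have "(\<Sum>s\<in>insert m A. \<bar>V s - vleft V s\<bar>) = \<bar>V m - vleft V m\<bar> + (\<Sum>s\<in>A. \<bar>V s - vleft V s\<bar>)"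
      using insert(1,2) by (subst sum.insert) auto
    moreover have "\<forall>i<Suc (Suc n). q i \<le> q (Suc i)"
      using np(2,3) a(3) by (auto simp: q_def less_Suc_eq)
    ultimately show "\<exists>n p. 0 \<le> p 0 \<and> p n \<le> b \<and> (\<forall>i<n. p i \<le> p (Suc i)) \<and>
     (\<Sum>s\<in>insert m A. \<bar>V s - vleft V s\<bar>) - \<epsilon> \<le> (\<Sum>i<n. \<bar>V (p (Suc i)) - V (p i)\<bar>)"
      using np(1,4) \<open>m \<le> b\<close> unfolding q_sum[symmetric]
      by (intro exI[of _ "Suc (Suc n)"] exI[of _ q]) (auto simp: q_def)
  qed
qed

lemma jump_sum_le_variation_bound:
  assumes B: "\<And>n p. 0 \<le> p 0 \<Longrightarrow> p n \<le> T \<Longrightarrow> (\<forall>i<n. p i \<le> p (Suc i)) \<Longrightarrow>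
    (\<Sum>i<n. \<bar>V (p (Suc i)) - V (p i)\<bar>) \<le> B"
    and "T \<ge> 0" "finite F" "F \<subseteq> {0<..T}"
  shows "(\<Sum>s\<in>F. \<bar>V s - vleft V s\<bar>) \<le> B"
proof (rule field_le_epsilon)
  fix \<epsilon> :: real assume "\<epsilon> > 0"
  then obtain n p where "0 \<le> p 0" "p n \<le> T" "\<forall>i<n. p i \<le> p (Suc i)"
     "(\<Sum>s\<in>F. \<bar>V s - vleft V s\<bar>) - \<epsilon> \<le> (\<Sum>i<n. \<bar>V (p (Suc i)) - V (p i)\<bar>)"
    using variation_approximates_jumps[OF assms(3)] assms(2,4) by blast
  with B[of p n] show "(\<Sum>s\<in>F. \<bar>V s - vleft V s\<bar>) \<le> B + \<epsilon>" by simp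
qed

lemma jumps_summable_on:
  assumes "T \<ge> 0"
  shows "(\<lambda>s. \<bar>V s - vleft V s\<bar>) summable_on {0<..T}"
proof -
  obtain B where "\<And>n p. 0 \<le> p 0 \<Longrightarrow> p n \<le> T \<Longrightarrow> (\<forall>i<n. p i \<le> p (Suc i)) \<Longrightarrow>
    (\<Sum>i<n. \<bar>V (p (Suc i)) - V (p i)\<bar>) \<le> B"
    using variation_bound[OF assms] by blast
  thus ?thesis using assms
    by (intro nonneg_bdd_above_summable_on bdd_aboveI) (auto intro!: jump_sum_le_variation_bound)
qed

lemma countable_jump_times: "countable {s. s > 0 \<and> V s \<noteq> vleft V s}"
proof -
  have "countable {s\<in>{0<..real n}. V s - vleft V s \<noteq> 0}" for n :: nat
    by (rule abs_summable_countable) (use jumps_summable_on[of "real n"] in simp)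
  moreover have "{s. s > 0 \<and> V s \<noteq> vleft V s} \<subseteq> (\<Union>n. {s\<in>{0<..real n}. V s - vleft V s \<noteq> 0})"
    using real_arch_simple by fastforce
  ultimately show ?thesis by (meson countable_UN countable_subset UNIV_I countableI_type)
qed

end

section \<open>Almost every level is simple\<close>

definition local_extremum_values :: "(real \<Rightarrow> real) \<Rightarrow> real set" where
  "local_extremum_values V = {V \<tau> | \<tau>. \<tau> > 0 \<and> (\<exists>d>0.
     (\<forall>s\<ge>0. \<bar>s - \<tau>\<bar> < d \<longrightarrow> V \<tau> \<le> V s) \<or> (\<forall>s\<ge>0. \<bar>s - \<tau>\<bar> < d \<longrightarrow> V s \<le> V \<tau>))}"

text \<open>Each local extremum value is the infimum or supremum of \<open>V\<close> over an interval with
  rational end points.\<close>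
lemma countable_local_extremum_values: "countable (local_extremum_values V)"
proof -
  define S where "S = (\<lambda>(p::real, q::real). {s. 0 \<le> s \<and> p < s \<and> s < q})"
  have "local_extremum_values V \<subseteq>
      (\<lambda>pq. Inf (V ` S pq)) ` (\<rat> \<times> \<rat>) \<union> (\<lambda>pq. Sup (V ` S pq)) ` (\<rat> \<times> \<rat>)"
  proof
    fix y assume "y \<in> local_extremum_values V"
    then obtain \<tau> d where t: "y = V \<tau>" "\<tau> > 0" "d > 0"
      "(\<forall>s\<ge>0. \<bar>s - \<tau>\<bar> < d \<longrightarrow> V \<tau> \<le> V s) \<or> (\<forall>s\<ge>0. \<bar>s - \<tau>\<bar> < d \<longrightarrow> V s \<le> V \<tau>)"
      unfolding local_extremum_values_def by blast
    obtain p where p: "p \<in> \<rat>" "\<tau> - d < p" "p < \<tau>" using Rats_dense_in_real[of "\<tau> - d" \<tau>] t by auto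
    obtain q where q: "q \<in> \<rat>" "\<tau> < q" "q < \<tau> + d" using Rats_dense_in_real[of \<tau> "\<tau> + d"] t by auto
    have "\<tau> \<in> S (p, q)" using p q t by (auto simp: S_def)
    have near: "\<And>s. s \<in> S (p, q) \<Longrightarrow> s \<ge> 0 \<and> \<bar>s - \<tau>\<bar> < d" using p q by (auto simp: S_def)
    show "y \<in> (\<lambda>pq. Inf (V ` S pq)) ` (\<rat> \<times> \<rat>) \<union> (\<lambda>pq. Sup (V ` S pq)) ` (\<rat> \<times> \<rat>)"
    proof (cases "\<forall>s\<ge>0. \<bar>s - \<tau>\<bar> < d \<longrightarrow> V \<tau> \<le> V s")
      case True
      have "Inf (V ` S (p, q)) = V \<tau>"
        by (rule cInf_eq_minimum) (use \<open>\<tau> \<in> S (p, q)\<close> near True in auto)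
      thus ?thesis using p q t by (intro UnI1) (auto intro!: image_eqI[of _ _ "(p,q)"])
    next
      case False
      hence "\<forall>s\<ge>0. \<bar>s - \<tau>\<bar> < d \<longrightarrow> V s \<le> V \<tau>" using t by auto
      hence "Sup (V ` S (p, q)) = V \<tau>"
        by (intro cSup_eq_maximum) (use \<open>\<tau> \<in> S (p, q)\<close> near in auto)
      thus ?thesis using p q t by (intro UnI2) (auto intro!: image_eqI[of _ _ "(p,q)"])
    qed
  qed
  moreover have "countable (\<rat> \<times> \<rat> :: (real \<times> real) set)" by (intro countable_SIGMA countable_rat)
  ultimately show ?thesis by (meson countable_Un countable_image countable_subset)
qed

lemma exists_step_across:
  fixes u :: "nat \<Rightarrow> real"
  shows "a < b \<Longrightarrow> (u a < x \<and> x \<le> u b) \<or> (u b < x \<and> x \<le> u a) \<Longrightarrow>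
    \<exists>i. a \<le> i \<and> i < b \<and> min (u i) (u (Suc i)) < x \<and> x \<le> max (u i) (u (Suc i))"
proof (induction b)
  case (Suc b)
  show ?case
  proof (cases "a < b \<and> ((u a < x \<and> x \<le> u b) \<or> (u b < x \<and> x \<le> u a))")
    case True
    thus ?thesis using Suc.IH by (meson less_SucI)
  next
    case False
    thus ?thesis using Suc.prems by (intro exI[of _ b]) (auto simp: less_Suc_eq)
  qed
qed simp

lemma card_steps_across_ge:
  fixes u :: "nat \<Rightarrow> real" and k :: "nat \<Rightarrow> nat"
  assumes k_less: "\<And>j. j < m \<Longrightarrow> k j < k (Suc j)" and "k m \<le> N"
    and alternating: "\<And>j. j < m \<Longrightarrow> (u (k j) - x) * (u (k (Suc j)) - x) < 0"
  shows "m \<le> card {i\<in>{..<N}. min (u i) (u (Suc i)) < x \<and> x \<le> max (u i) (u (Suc i))}"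
proof -
  have k_mono: "k i \<le> k j" if "i \<le> j" "j \<le> m" for i j
    using that
  proof (induction j rule: dec_induct)
    case (step j)
    thus ?case using k_less[of j] by simp
  qed simp
  have "\<exists>i. k j \<le> i \<and> i < k (Suc j) \<and> min (u i) (u (Suc i)) < x \<and> x \<le> max (u i) (u (Suc i))"
    if "j < m" for j
    using alternating[OF that] by (intro exists_step_across k_less that) (auto simp: mult_less_0_iff)
  then obtain h where h: "\<And>j. j < m \<Longrightarrow> k j \<le> h j \<and> h j < k (Suc j) \<and>
      min (u (h j)) (u (Suc (h j))) < x \<and> x \<le> max (u (h j)) (u (Suc (h j)))"
    by metis
  have h_less: "h i < h j" if "i < j" "j < m" for i j
  proof -
    have "h i < k (Suc i)" "k j \<le> h j" using h[of i] h[of j] that by auto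
    moreover have "k (Suc i) \<le> k j" using k_mono that by simp
    ultimately show ?thesis by linarith
  qed
  have "inj_on h {..<m}"
  proof (rule inj_onI)
    fix i j assume "i \<in> {..<m}" "j \<in> {..<m}" "h i = h j"
    thus "i = j" using h_less[of i j] h_less[of j i] by (cases i j rule: linorder_cases) auto
  qed
  have sub: "h ` {..<m} \<subseteq> {i\<in>{..<N}. min (u i) (u (Suc i)) < x \<and> x \<le> max (u i) (u (Suc i))}"
  proof
    fix i assume "i \<in> h ` {..<m}"
    then obtain j where "j < m" "i = h j" by auto
    moreover have "k (Suc j) \<le> k m" using k_mono \<open>j < m\<close> by simp
    ultimately show "i \<in> {i\<in>{..<N}. min (u i) (u (Suc i)) < x \<and> x \<le> max (u i) (u (Suc i))}"
      using h[of j] \<open>k m \<le> N\<close> by auto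
  qed
  have "m = card (h ` {..<m})" using \<open>inj_on h {..<m}\<close> by (simp add: card_image)
  also have "\<dots> \<le> card {i\<in>{..<N}. min (u i) (u (Suc i)) < x \<and> x \<le> max (u i) (u (Suc i))}"
    using sub by (intro card_mono) simp_all
  finally show ?thesis .
qed

definition dyadic_point :: "real \<Rightarrow> nat \<Rightarrow> nat \<Rightarrow> real" where
  "dyadic_point c n k = c * real k / 2 ^ n"

definition dyadic_step :: "(real \<Rightarrow> real) \<Rightarrow> real \<Rightarrow> nat \<Rightarrow> nat \<Rightarrow> real set" where
  "dyadic_step V c n k =
     {min (V (dyadic_point c n k)) (V (dyadic_point c n (Suc k))) <..
      max (V (dyadic_point c n k)) (V (dyadic_point c n (Suc k)))}"

definition dyadic_crossings :: "(real \<Rightarrow> real) \<Rightarrow> real \<Rightarrow> nat \<Rightarrow> real \<Rightarrow> ennreal" where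
  "dyadic_crossings V c n x = (\<Sum>k<2^n. indicator (dyadic_step V c n k) x)"

lemma dyadic_crossings_eq_card:
  "dyadic_crossings V c n x = of_nat (card {k\<in>{..<2^n}. x \<in> dyadic_step V c n k})"
proof -
  have "dyadic_crossings V c n x = (\<Sum>k<2^n. of_bool (x \<in> dyadic_step V c n k))"
    unfolding dyadic_crossings_def by (rule sum.cong) (auto simp: indicator_def)
  thus ?thesis by (simp add: Int_def)
qed

lemma dyadic_point_less_iff: "c > 0 \<Longrightarrow> dyadic_point c n a < dyadic_point c n b \<longleftrightarrow> a < b"
  unfolding dyadic_point_def by (simp add: field_simps)

lemma dyadic_point_ceiling:
  assumes "c > 0" and "y \<ge> 0"
  shows "y \<le> dyadic_point c n (nat \<lceil>y * 2^n / c\<rceil>)"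
    and "dyadic_point c n (nat \<lceil>y * 2^n / c\<rceil>) < y + c / 2^n"
proof -
  define z where "z = y * 2^n / c"
  have "z \<ge> 0" using assms by (simp add: z_def)
  hence point: "dyadic_point c n (nat \<lceil>z\<rceil>) = c * of_int \<lceil>z\<rceil> / 2^n" by (simp add: dyadic_point_def)
  have y: "y = c * z / 2^n" using assms(1) by (simp add: z_def)
  also have "\<dots> \<le> c * of_int \<lceil>z\<rceil> / 2^n"
    using assms(1) by (intro divide_right_mono mult_left_mono) auto
  finally show "y \<le> dyadic_point c n (nat \<lceil>y * 2^n / c\<rceil>)" unfolding z_def[symmetric] point .
  have "c * of_int \<lceil>z\<rceil> / 2^n < c * (z + 1) / 2^n"
    using assms(1) by (intro divide_strict_right_mono mult_strict_left_mono) (use ceiling_correct[of z] in auto)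
  also have "\<dots> = y + c / 2^n" unfolding y by (simp add: distrib_left add_divide_distrib)
  finally show "dyadic_point c n (nat \<lceil>y * 2^n / c\<rceil>) < y + c / 2^n" unfolding z_def[symmetric] point .
qed

lemma eventually_dyadic_rounding:
  assumes "c > 0" and s_less: "\<And>j. j < m \<Longrightarrow> s j < s (Suc j)"
    and s_range: "\<And>j. j \<le> m \<Longrightarrow> 0 \<le> s j \<and> s j < c" and \<delta>: "\<And>j. j \<le> m \<Longrightarrow> \<delta> j > 0"
  shows "eventually (\<lambda>n. \<exists>k. (\<forall>j<m. k j < k (Suc j)) \<and> k m \<le> 2^n \<and>
    (\<forall>j\<le>m. s j \<le> dyadic_point c n (k j) \<and> dyadic_point c n (k j) < s j + \<delta> j)) sequentially"
proof -
  define E where "E = \<delta> ` {..m} \<union> (\<lambda>j. s (Suc j) - s j) ` {..<m} \<union> {c - s m}"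
  have "finite E" "E \<noteq> {}" by (auto simp: E_def)
  have "Min E > 0"
    using \<open>finite E\<close> \<open>E \<noteq> {}\<close> \<delta> s_less s_range[of m] by (auto simp: E_def Min_gr_iff)
  have \<eta>: "\<And>j. j \<le> m \<Longrightarrow> Min E \<le> \<delta> j" "\<And>j. j < m \<Longrightarrow> Min E \<le> s (Suc j) - s j" "Min E \<le> c - s m"
    by (rule Min_le[OF \<open>finite E\<close>], simp add: E_def)+
  have "eventually (\<lambda>n. c / 2^n < Min E) sequentially"
    using order_tendstoD(2)[OF LIMSEQ_divide_realpow_zero[of 2 c] \<open>Min E > 0\<close>] by simp
  thus ?thesis
  proof eventually_elim
    case (elim n)
    define k where "k j = nat \<lceil>s j * 2^n / c\<rceil>" for j
    have k: "s j \<le> dyadic_point c n (k j)" "dyadic_point c n (k j) < s j + c / 2^n" if "j \<le> m" for j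
      unfolding k_def using dyadic_point_ceiling[OF \<open>c > 0\<close>] s_range[OF that] by auto
    have "k j < k (Suc j)" if "j < m" for j
    proof -
      have "dyadic_point c n (k j) < dyadic_point c n (k (Suc j))"
        using k[of j] k[of "Suc j"] \<eta>(2)[OF that] elim that by simp
      thus ?thesis using dyadic_point_less_iff[OF \<open>c > 0\<close>] by blast
    qed
    moreover have "k m \<le> 2^n"
      using k[of m] \<eta>(3) elim dyadic_point_less_iff[OF \<open>c > 0\<close>, of n "2^n" "k m"]
      by (auto simp: dyadic_point_def)
    moreover have "dyadic_point c n (k j) < s j + \<delta> j" if "j \<le> m" for j
      using k(2)[OF that] \<eta>(1)[OF that] elim by simp
    ultimately show ?case using k(1) by blast
  qed
qed

context cadlag_path
begin

lemma dyadic_crossings_eventually_ge: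
  assumes "c > 0" and s_less: "\<And>j. j < m \<Longrightarrow> s j < s (Suc j)"
    and s_range: "\<And>j. j \<le> m \<Longrightarrow> 0 \<le> s j \<and> s j < c"
    and alternating: "\<And>j. j < m \<Longrightarrow> (V (s j) - x) * (V (s (Suc j)) - x) < 0"
  shows "eventually (\<lambda>n. of_nat m \<le> dyadic_crossings V c n x) sequentially"
proof (cases "m = 0")
  case m: False
  have "V (s j) \<noteq> x" if "j \<le> m" for j
    using alternating[of j] alternating[of "j - 1"] that m by (cases "j < m") (auto simp: Suc_le_eq)
  hence "\<exists>d>0. \<forall>r. s j \<le> r \<longrightarrow> r < s j + d \<longrightarrow> (V r < x \<longleftrightarrow> V (s j) < x) \<and> V r \<noteq> x"
    if "j \<le> m" for j
    using side_persists_right[of "s j" x] s_range[OF that] that by metis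
  then obtain \<delta> where \<delta>: "\<And>j. j \<le> m \<Longrightarrow> \<delta> j > 0"
    "\<And>j r. j \<le> m \<Longrightarrow> s j \<le> r \<Longrightarrow> r < s j + \<delta> j \<Longrightarrow> (V r < x \<longleftrightarrow> V (s j) < x) \<and> V r \<noteq> x"
    by metis
  have "eventually (\<lambda>n. \<exists>k. (\<forall>j<m. k j < k (Suc j)) \<and> k m \<le> 2^n \<and>
    (\<forall>j\<le>m. s j \<le> dyadic_point c n (k j) \<and> dyadic_point c n (k j) < s j + \<delta> j)) sequentially"
    using \<open>c > 0\<close> s_less s_range \<delta>(1) by (rule eventually_dyadic_rounding)
  thus ?thesis
  proof eventually_elim
    case (elim n)
    then obtain k where k: "\<And>j. j < m \<Longrightarrow> k j < k (Suc j)" "k m \<le> 2^n"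
      "\<And>j. j \<le> m \<Longrightarrow> s j \<le> dyadic_point c n (k j) \<and> dyadic_point c n (k j) < s j + \<delta> j"
      by blast
    have side: "(V (dyadic_point c n (k j)) < x \<longleftrightarrow> V (s j) < x) \<and> V (dyadic_point c n (k j)) \<noteq> x"
      if "j \<le> m" for j
      using \<delta>(2) k(3) that by blast
    have "(V (dyadic_point c n (k j)) - x) * (V (dyadic_point c n (k (Suc j))) - x) < 0"
      if "j < m" for j
      using side[of j] side[of "Suc j"] alternating[OF that] that by (auto simp: mult_less_0_iff)
    hence "m \<le> card {i\<in>{..<2^n}. min (V (dyadic_point c n i)) (V (dyadic_point c n (Suc i))) < x
        \<and> x \<le> max (V (dyadic_point c n i)) (V (dyadic_point c n (Suc i)))}"
      using k(1,2) by (intro card_steps_across_ge[of m k]) auto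
    thus ?case by (simp add: dyadic_crossings_eq_card dyadic_step_def)
  qed
qed simp

lemma crossing_time_approached_from_both_sides:
  assumes "x \<notin> local_extremum_values V" and "\<tau> \<in> crossing_times V x" and "\<epsilon> > 0"
  obtains s1 s2 where "0 \<le> s1" "\<bar>s1 - \<tau>\<bar> < \<epsilon>" "V s1 < x" "0 \<le> s2" "\<bar>s2 - \<tau>\<bar> < \<epsilon>" "x < V s2"
proof -
  have "\<tau> > 0" using assms(2) by (simp add: crossing_times_def)
  show ?thesis
  proof (cases "V \<tau> = x")
    case True
    hence "\<not> (\<forall>s\<ge>0. \<bar>s - \<tau>\<bar> < \<epsilon> \<longrightarrow> V \<tau> \<le> V s)" "\<not> (\<forall>s\<ge>0. \<bar>s - \<tau>\<bar> < \<epsilon> \<longrightarrow> V s \<le> V \<tau>)"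
      using assms(1,3) \<open>\<tau> > 0\<close> unfolding local_extremum_values_def by blast+
    then obtain s1 s2 where "0 \<le> s1" "\<bar>s1 - \<tau>\<bar> < \<epsilon>" "V s1 < V \<tau>"
      and "0 \<le> s2" "\<bar>s2 - \<tau>\<bar> < \<epsilon>" "V \<tau> < V s2"
      by (auto simp: not_le)
    thus ?thesis using True that by simp
  next
    case False
    hence opposite: "(vleft V \<tau> < x \<and> x < V \<tau>) \<or> (V \<tau> < x \<and> x < vleft V \<tau>)"
      using assms(2) by (auto simp: crossing_times_def)
    hence "vleft V \<tau> \<noteq> x" by auto
    then obtain d where d: "d > 0"
      "\<And>r. \<tau> - d < r \<Longrightarrow> r < \<tau> \<Longrightarrow> (V r < x \<longleftrightarrow> vleft V \<tau> < x) \<and> V r \<noteq> x"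
      using side_persists_left[OF \<open>\<tau> > 0\<close>] by blast
    define s where "s = \<tau> - min (min d \<epsilon>) \<tau> / 2"
    have "0 \<le> s" "\<bar>s - \<tau>\<bar> < \<epsilon>" "\<tau> - d < s" "s < \<tau>"
      using d(1) assms(3) \<open>\<tau> > 0\<close> by (auto simp: s_def min_def)
    moreover have "(V s < x \<longleftrightarrow> \<not> V \<tau> < x) \<and> V s \<noteq> x"
      using d(2)[OF \<open>\<tau> - d < s\<close> \<open>s < \<tau>\<close>] opposite by auto
    ultimately show ?thesis
      using that[of s \<tau>] that[of \<tau> s] \<open>\<tau> > 0\<close> assms(3) False by (cases "V \<tau> < x") auto
  qed
qed

text \<open>Near each of \<open>m + 1\<close> distinct crossing times \<open>V\<close> takes values on both sides of \<open>x\<close>,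
  since \<open>x\<close> is not a local extremum value; pick them alternately.\<close>
lemma long_alternating_chain:
  assumes "x \<notin> local_extremum_values V" and "infinite (crossing_times V x \<inter> {0..T})"
  obtains s where "\<And>j. j < m \<Longrightarrow> s j < s (Suc j)" "\<And>j. j \<le> m \<Longrightarrow> 0 \<le> s j \<and> s j < T + 1"
    "\<And>j. j < m \<Longrightarrow> (V (s j) - x) * (V (s (Suc j)) - x) < 0"
proof -
  obtain B where B: "finite B" "card B = Suc m" "B \<subseteq> crossing_times V x \<inter> {0..T}"
    using infinite_arbitrarily_large[OF assms(2)] by blast
  define t where "t j = sorted_list_of_set B ! j" for j
  have t: "t j \<in> crossing_times V x" "t j \<le> T" if "j \<le> m" for j
    using B nth_mem[of j "sorted_list_of_set B"] that by (auto simp: t_def)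
  have t_less: "t i < t j" if "i < j" "j \<le> m" for i j
    unfolding t_def using B(1,2) that
    by (intro sorted_wrt_nth_less[OF sorted_list_of_set.strict_sorted_key_list_of_set]) auto
  define \<rho> where "\<rho> = Min (insert 1 ((\<lambda>j. (t (Suc j) - t j) / 2) ` {..<m}))"
  have "\<rho> > 0" using t_less by (auto simp: \<rho>_def)
  have \<rho>: "\<rho> \<le> 1" "\<And>j. j < m \<Longrightarrow> \<rho> \<le> (t (Suc j) - t j) / 2"
    unfolding \<rho>_def by (rule Min_le; simp)+
  have "\<exists>s\<ge>0. \<bar>s - t j\<bar> < \<rho> \<and> (if even j then x < V s else V s < x)" if j: "j \<le> m" for j
  proof -
    obtain s1 s2 where "0 \<le> s1" "\<bar>s1 - t j\<bar> < \<rho>" "V s1 < x" "0 \<le> s2" "\<bar>s2 - t j\<bar> < \<rho>" "x < V s2"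
      using crossing_time_approached_from_both_sides[OF assms(1) t(1)[OF j] \<open>\<rho> > 0\<close>] .
    thus ?thesis by (cases "even j") auto
  qed
  then obtain s where s: "\<And>j. j \<le> m \<Longrightarrow>
      0 \<le> s j \<and> \<bar>s j - t j\<bar> < \<rho> \<and> (if even j then x < V (s j) else V (s j) < x)"
    by metis
  show ?thesis
  proof
    show "s j < s (Suc j)" if "j < m" for j
      using s[of j] s[of "Suc j"] \<rho>(2)[OF that] that by (auto simp: abs_less_iff)
    show "0 \<le> s j \<and> s j < T + 1" if "j \<le> m" for j
      using s[OF that] t(2)[OF that] \<rho>(1) by (auto simp: abs_less_iff)
    show "(V (s j) - x) * (V (s (Suc j)) - x) < 0" if "j < m" for j
      using s[of j] s[of "Suc j"] that by (cases "even j") (auto simp: mult_less_0_iff)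
  qed
qed

end

context finite_variation_path
begin

lemma nn_integral_dyadic_crossings_le:
  assumes "c > 0" and B: "\<And>n p. 0 \<le> p 0 \<Longrightarrow> p n \<le> c \<Longrightarrow> (\<forall>i<n. p i \<le> p (Suc i)) \<Longrightarrow>
    (\<Sum>i<n. \<bar>V (p (Suc i)) - V (p i)\<bar>) \<le> B"
  shows "(\<integral>\<^sup>+x. dyadic_crossings V c n x \<partial>lborel) \<le> ennreal B"
proof -
  have "(\<integral>\<^sup>+x. dyadic_crossings V c n x \<partial>lborel) = (\<Sum>k<2^n. emeasure lborel (dyadic_step V c n k))"
    unfolding dyadic_crossings_def by (subst nn_integral_sum) (auto simp: dyadic_step_def)
  also have "\<dots> = ennreal (\<Sum>k<2^n. \<bar>V (dyadic_point c n (Suc k)) - V (dyadic_point c n k)\<bar>)"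
  proof -
    have "max a b - min a b = \<bar>b - a\<bar>" for a b :: real by arith
    thus ?thesis by (subst sum_ennreal[symmetric]) (auto intro!: sum.cong simp: dyadic_step_def)
  qed
  also have "\<dots> \<le> ennreal B"
  proof -
    have "dyadic_point c n i \<le> dyadic_point c n (Suc i)" for i
      using dyadic_point_less_iff[OF assms(1), of n i "Suc i"] by simp
    thus ?thesis by (intro ennreal_leI B) (simp_all add: dyadic_point_def)
  qed
  finally show ?thesis .
qed

text \<open>Fatou's lemma turns the uniform bound on the integrals into a.e. finiteness.\<close>
lemma AE_liminf_dyadic_crossings_finite:
  assumes "c > 0"
  shows "AE x in lborel. liminf (\<lambda>n. dyadic_crossings V c n x) \<noteq> \<infinity>"
proof -
  obtain B where "\<And>n p. 0 \<le> p 0 \<Longrightarrow> p n \<le> c \<Longrightarrow> (\<forall>i<n. p i \<le> p (Suc i)) \<Longrightarrow>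
    (\<Sum>i<n. \<bar>V (p (Suc i)) - V (p i)\<bar>) \<le> B"
    using variation_bound[of c] assms by fastforce
  note bound = nn_integral_dyadic_crossings_le[OF assms this]
  have meas: "\<And>n. dyadic_crossings V c n \<in> borel_measurable lborel"
    unfolding dyadic_crossings_def[abs_def] by (auto simp: dyadic_step_def)
  have "(\<integral>\<^sup>+x. liminf (\<lambda>n. dyadic_crossings V c n x) \<partial>lborel) \<le>
      liminf (\<lambda>n. \<integral>\<^sup>+x. dyadic_crossings V c n x \<partial>lborel)"
    by (rule nn_integral_liminf[OF meas])
  also have "\<dots> \<le> ennreal B"
    by (rule Liminf_le) (auto intro!: always_eventually bound)
  also have "\<dots> < \<infinity>" by simp
  finally show ?thesis using meas by (intro nn_integral_PInf_AE) auto
qed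

lemma simple_level_if:
  assumes "x \<notin> local_extremum_values V"
    and "x \<notin> V ` {s. s > 0 \<and> V s \<noteq> vleft V s} \<union> vleft V ` {s. s > 0 \<and> V s \<noteq> vleft V s}"
    and finite_liminf: "\<And>N::nat. liminf (\<lambda>n. dyadic_crossings V (real N + 1) n x) \<noteq> \<infinity>"
  shows "simple_level V x"
  unfolding simple_level_def
proof (intro conjI allI)
  show "\<not> (\<exists>t>0. V t - vleft V t \<noteq> 0 \<and> (x = V t \<or> x = vleft V t))"
    using assms(2) by auto
next
  fix T :: real
  show "finite (crossing_times V x \<inter> {0..T})"
  proof (rule ccontr)
    assume "infinite (crossing_times V x \<inter> {0..T})"
    moreover have "crossing_times V x \<inter> {0..T} \<subseteq> crossing_times V x \<inter> {0..real (nat \<lceil>T\<rceil>)}"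
      by auto linarith
    ultimately have inf: "infinite (crossing_times V x \<inter> {0..real (nat \<lceil>T\<rceil>)})"
      using finite_subset by blast
    have "of_nat m \<le> liminf (\<lambda>n. dyadic_crossings V (real (nat \<lceil>T\<rceil>) + 1) n x)" for m
    proof -
      obtain s where "\<And>j. j < m \<Longrightarrow> s j < s (Suc j)"
        "\<And>j. j \<le> m \<Longrightarrow> 0 \<le> s j \<and> s j < real (nat \<lceil>T\<rceil>) + 1"
        "\<And>j. j < m \<Longrightarrow> (V (s j) - x) * (V (s (Suc j)) - x) < 0"
        using long_alternating_chain[OF assms(1) inf] by blast
      thus ?thesis
        by (intro Liminf_bounded dyadic_crossings_eventually_ge[where c = "real (nat \<lceil>T\<rceil>) + 1" and s = s]) auto
    qed
    hence "liminf (\<lambda>n. dyadic_crossings V (real (nat \<lceil>T\<rceil>) + 1) n x) = \<infinity>"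
      by (metis ennreal_Ex_less_of_nat infinity_ennreal_def not_le top.not_eq_extremum)
    thus False using finite_liminf by blast
  qed
qed

lemma AE_simple_level: "AE x in lborel. simple_level V x"
proof -
  have "AE x in lborel. x \<notin> local_extremum_values V"
    by (intro AE_not_in countable_imp_null_set_lborel countable_local_extremum_values)
  moreover have "AE x in lborel.
      x \<notin> V ` {s. s > 0 \<and> V s \<noteq> vleft V s} \<union> vleft V ` {s. s > 0 \<and> V s \<noteq> vleft V s}"
    using countable_jump_times by (intro AE_not_in countable_imp_null_set_lborel) auto
  moreover have "AE x in lborel. \<forall>N::nat. liminf (\<lambda>n. dyadic_crossings V (real N + 1) n x) \<noteq> \<infinity>"
    by (subst AE_all_countable) (intro allI AE_liminf_dyadic_crossings_finite, simp)
  ultimately show ?thesis by eventually_elim (auto intro: simple_level_if)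
qed

end

section \<open>Integrating the crossing balance\<close>

definition signed_indicator :: "real \<Rightarrow> real \<Rightarrow> real \<Rightarrow> real" where
  "signed_indicator a b x =
     (if a < b then indicator {a..b} x else if b < a then - indicator {b..a} x else 0)"

lemma signed_indicator_eq_of_bool:
  "x \<noteq> a \<Longrightarrow> x \<noteq> b \<Longrightarrow> signed_indicator a b x = of_bool (x < b) - of_bool (x < a)"
  by (auto simp: signed_indicator_def indicator_def)

lemma signed_indicator_nonzero: "signed_indicator a b x \<noteq> 0 \<Longrightarrow> min a b \<le> x \<and> x \<le> max a b"
  by (auto simp: signed_indicator_def indicator_def split: if_splits)

lemma borel_measurable_signed_indicator: "signed_indicator a b \<in> borel_measurable lborel"
  unfolding signed_indicator_def[abs_def] by measurable

lemma integral_signed_indicator: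
  fixes g G :: "real \<Rightarrow> real"
  assumes "continuous_on UNIV g" and "\<And>x. (G has_real_derivative g x) (at x)"
  shows "integrable lborel (\<lambda>x. g x * signed_indicator a b x)"
    and "(\<integral>x. g x * signed_indicator a b x \<partial>lborel) = G b - G a"
proof -
  have FTC: "integrable lborel (\<lambda>x. g x * indicator {c..d} x)"
    "(\<integral>x. g x * indicator {c..d} x \<partial>lborel) = G d - G c" if "c \<le> d" for c d
  proof -
    have "set_integrable lborel {c..d} g"
      by (rule borel_integrable_atLeastAtMost') (rule continuous_on_subset[OF assms(1) subset_UNIV])
    thus "integrable lborel (\<lambda>x. g x * indicator {c..d} x)"
      by (simp add: set_integrable_def mult.commute)
    have "(\<integral>x. indicator {c..d} x *\<^sub>R g x \<partial>lborel) = G d - G c"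
      using assms continuous_on_subset[OF assms(1) subset_UNIV]
      by (intro integral_FTC_atLeastAtMost[OF that])
         (auto simp: has_real_derivative_iff_has_vector_derivative intro: has_vector_derivative_at_within)
    thus "(\<integral>x. g x * indicator {c..d} x \<partial>lborel) = G d - G c" by (simp add: mult.commute)
  qed
  consider "a < b" | "b < a" | "a = b" by linarith
  hence "integrable lborel (\<lambda>x. g x * signed_indicator a b x) \<and>
      (\<integral>x. g x * signed_indicator a b x \<partial>lborel) = G b - G a"
  proof cases
    case 1 thus ?thesis using FTC[of a b] by (simp add: signed_indicator_def)
  next
    case 2 thus ?thesis using FTC[of b a] by (simp add: signed_indicator_def)
  qed (simp add: signed_indicator_def)
  thus "integrable lborel (\<lambda>x. g x * signed_indicator a b x)"
    "(\<integral>x. g x * signed_indicator a b x \<partial>lborel) = G b - G a" by simp_all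
qed

lemma integral_abs_signed_indicator:
  shows "integrable lborel (\<lambda>x. \<bar>signed_indicator a b x\<bar>)"
    and "(\<integral>x. \<bar>signed_indicator a b x\<bar> \<partial>lborel) = \<bar>b - a\<bar>"
proof -
  have "\<bar>signed_indicator a b x\<bar> = 1 * signed_indicator (min a b) (max a b) x" for x
    by (auto simp: signed_indicator_def)
  moreover note integral_signed_indicator[of "\<lambda>_. 1" "\<lambda>x. x" "min a b" "max a b"]
  ultimately show "integrable lborel (\<lambda>x. \<bar>signed_indicator a b x\<bar>)"
    "(\<integral>x. \<bar>signed_indicator a b x\<bar> \<partial>lborel) = \<bar>b - a\<bar>"
    by (auto intro: DERIV_ident)
qed

lemma sums_bij_finite_support:
  assumes "bij_betw e UNIV S" and "finite F" "F \<subseteq> S" and "\<And>s. s \<in> S \<Longrightarrow> s \<notin> F \<Longrightarrow> g s = 0"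
  shows "(\<lambda>i. g (e i)) sums (\<Sum>s\<in>F. g s)"
proof -
  have "inj e" "range e = S" using assms(1) by (auto simp: bij_betw_def)
  hence "finite (e -` F)" using assms(2) by (simp add: finite_vimageI)
  moreover have "g (e i) = 0" if "i \<notin> e -` F" for i
    using assms(4) that \<open>range e = S\<close> by blast
  ultimately have "(\<lambda>i. g (e i)) sums (\<Sum>i\<in>e -` F. g (e i))" by (rule sums_finite)
  moreover have "e ` (e -` F) = F" using assms(3) \<open>range e = S\<close> by blast
  hence "(\<Sum>i\<in>e -` F. g (e i)) = (\<Sum>s\<in>F. g s)"
    using sum.reindex[OF inj_on_subset[OF \<open>inj e\<close> subset_UNIV], of g "e -` F"] by simp
  ultimately show ?thesis by simp
qed

lemma finite_upcross_downcross_sets: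
  assumes "simple_level V x"
  shows "finite (upcross_set V x t)" and "finite (downcross_set V x t)"
proof -
  have "finite (crossing_times V x \<inter> {0..t})" using assms by (simp add: simple_level_def)
  thus "finite (upcross_set V x t)" "finite (downcross_set V x t)"
    by (auto elim!: finite_subset[rotated]
        simp: upcross_set_def downcross_set_def decr_through_def incr_through_def crossing_times_def)
qed

locale change_of_variables = finite_variation_path +
  fixes f f' :: "real \<Rightarrow> real" and t M L :: real
  assumes f_deriv: "\<And>x. (f has_real_derivative f' x) (at x)"
    and f'_cont: "continuous_on UNIV f'"
    and t_pos: "t > 0"
    and V_bound: "\<And>s. 0 \<le> s \<Longrightarrow> s \<le> t \<Longrightarrow> \<bar>V s\<bar> \<le> M"
    and f'_bound: "\<And>y. \<bar>y\<bar> \<le> M \<Longrightarrow> \<bar>f' y\<bar> \<le> L"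
begin

abbreviation jump_indicator :: "real \<Rightarrow> real \<Rightarrow> real" where
  "jump_indicator s \<equiv> signed_indicator (vleft V s) (V s)"

lemma vleft_bound: "0 < s \<Longrightarrow> s \<le> t \<Longrightarrow> \<bar>vleft V s\<bar> \<le> M"
  using V_bound by (intro abs_vleft_le) auto

lemma L_nonneg: "L \<ge> 0"
  using f'_bound[of "V 0"] V_bound[of 0] t_pos by simp

lemma integral_jump_indicator:
  "integrable lborel (\<lambda>x. f' x * jump_indicator s x)"
  "(\<integral>x. f' x * jump_indicator s x \<partial>lborel) = f (V s) - f (vleft V s)"
  using integral_signed_indicator[OF f'_cont f_deriv] by auto

lemma integral_norm_jump_indicator_le:
  assumes "s \<in> {0<..t}"
  shows "(\<integral>x. norm (f' x * jump_indicator s x) \<partial>lborel) \<le> L * \<bar>V s - vleft V s\<bar>"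
proof -
  have "\<bar>f' x * jump_indicator s x\<bar> \<le> L * \<bar>jump_indicator s x\<bar>" for x
  proof (cases "jump_indicator s x = 0")
    case False
    hence "\<bar>x\<bar> \<le> M"
      using signed_indicator_nonzero[OF False] V_bound[of s] vleft_bound[of s] assms by auto
    thus ?thesis using f'_bound by (simp add: abs_mult mult_right_mono)
  qed simp
  hence "(\<integral>x. norm (f' x * jump_indicator s x) \<partial>lborel) \<le> (\<integral>x. L * \<bar>jump_indicator s x\<bar> \<partial>lborel)"
    using integral_jump_indicator integral_abs_signed_indicator
    by (intro integral_mono) auto
  also have "\<dots> = L * \<bar>V s - vleft V s\<bar>" using integral_abs_signed_indicator by simp
  finally show ?thesis .
qed

lemma abs_jump_of_f_le: "s \<in> {0<..t} \<Longrightarrow> \<bar>f (V s) - f (vleft V s)\<bar> \<le> L * \<bar>V s - vleft V s\<bar>"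
  using integral_norm_jump_indicator_le[of s] integral_jump_indicator(1)[of s]
    integral_norm_bound[of lborel "\<lambda>x. f' x * jump_indicator s x"]
  by (simp add: integral_jump_indicator(2))

lemma jumps_of_f_summable_on: "(\<lambda>s. f (V s) - f (vleft V s)) summable_on {0<..t}"
proof -
  have "(\<lambda>s. L * \<bar>V s - vleft V s\<bar>) summable_on {0<..t}"
    using jumps_summable_on t_pos by (intro summable_on_cmult_right) auto
  hence "Infinite_Sum.abs_summable_on (\<lambda>s. L * \<bar>V s - vleft V s\<bar>) {0<..t}"
    by (rule summable_on_iff_abs_summable_on_real[THEN iffD1])
  hence "Infinite_Sum.abs_summable_on (\<lambda>s. f (V s) - f (vleft V s)) {0<..t}"
    by (rule Infinite_Sum.abs_summable_on_comparison_test) (use abs_jump_of_f_le L_nonneg in \<open>auto simp: abs_mult\<close>)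
  thus ?thesis by (rule summable_on_iff_abs_summable_on_real[THEN iffD2])
qed

text \<open>The jump times in \<open>(0, t]\<close>, padded by the points \<open>t / (n + 1)\<close> so that the set is
  infinite and can be enumerated bijectively by \<open>\<nat>\<close>; the padding contributes no terms.\<close>
definition enumerated_times :: "real set" where
  "enumerated_times = {s\<in>{0<..t}. V s \<noteq> vleft V s} \<union> range (\<lambda>n::nat. t / real (Suc n))"

definition jump_enum :: "nat \<Rightarrow> real" where
  "jump_enum = from_nat_into enumerated_times"

lemma enumerated_times_subset: "enumerated_times \<subseteq> {0<..t}"
  unfolding enumerated_times_def using t_pos by (auto simp: field_simps)

lemma bij_betw_jump_enum: "bij_betw jump_enum UNIV enumerated_times"
proof -
  have "countable {s\<in>{0<..t}. V s \<noteq> vleft V s}"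
    by (rule countable_subset[OF _ countable_jump_times]) auto
  hence "countable enumerated_times" unfolding enumerated_times_def by auto
  moreover have "inj (\<lambda>n::nat. t / real (Suc n))" using t_pos by (auto simp: inj_def field_simps)
  hence "infinite enumerated_times" unfolding enumerated_times_def using range_inj_infinite by blast
  ultimately show ?thesis unfolding jump_enum_def by (rule bij_betw_from_nat_into)
qed

lemma jump_enum_in: "jump_enum i \<in> {0<..t}"
proof -
  have "jump_enum i \<in> enumerated_times" using bij_betw_jump_enum by (auto simp: bij_betw_def)
  thus ?thesis using enumerated_times_subset by blast
qed

lemma jumps_of_f_sums:
  "(\<lambda>i. f (V (jump_enum i)) - f (vleft V (jump_enum i))) sums (\<Sum>\<^sub>\<infinity>s\<in>{0<..t}. f (V s) - f (vleft V s))"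
proof -
  have "(\<Sum>\<^sub>\<infinity>s\<in>{0<..t}. f (V s) - f (vleft V s)) = (\<Sum>\<^sub>\<infinity>s\<in>enumerated_times. f (V s) - f (vleft V s))"
    by (rule infsum_cong_neutral) (use enumerated_times_subset in \<open>auto simp: enumerated_times_def\<close>)
  moreover have "(\<lambda>s. f (V s) - f (vleft V s)) summable_on enumerated_times"
    by (rule summable_on_subset_banach[OF jumps_of_f_summable_on enumerated_times_subset])
  hence "((\<lambda>s. f (V s) - f (vleft V s)) has_sum (\<Sum>\<^sub>\<infinity>s\<in>enumerated_times. f (V s) - f (vleft V s)))
      enumerated_times" by (rule has_sum_infsum)
  hence "((\<lambda>i. f (V (jump_enum i)) - f (vleft V (jump_enum i))) has_sum
      (\<Sum>\<^sub>\<infinity>s\<in>enumerated_times. f (V s) - f (vleft V s))) UNIV"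
    using has_sum_reindex_bij_betw[OF bij_betw_jump_enum, of "\<lambda>s. f (V s) - f (vleft V s)"] by simp
  ultimately show ?thesis by (simp add: has_sum_imp_sums)
qed

lemma summable_jump_sizes: "summable (\<lambda>i. \<bar>V (jump_enum i) - vleft V (jump_enum i)\<bar>)"
proof -
  have "(\<lambda>s. \<bar>V s - vleft V s\<bar>) summable_on enumerated_times"
    using jumps_summable_on t_pos by (intro summable_on_subset_banach[OF _ enumerated_times_subset]) simp
  hence "(\<lambda>i. \<bar>V (jump_enum i) - vleft V (jump_enum i)\<bar>) summable_on UNIV"
    using summable_on_reindex_bij_betw[OF bij_betw_jump_enum, of "\<lambda>s. \<bar>V s - vleft V s\<bar>"] by simp
  thus ?thesis by (rule summable_on_imp_summable)
qed

lemma jump_indicator_simple_level: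
  assumes "simple_level V x" and "s > 0"
  shows "jump_indicator s x = of_bool (x < V s) - of_bool (x < vleft V s)"
proof (cases "V s = vleft V s")
  case False
  hence "x \<noteq> V s" "x \<noteq> vleft V s" using assms by (auto simp: simple_level_def)
  thus ?thesis by (simp add: signed_indicator_eq_of_bool)
qed (simp add: signed_indicator_def)

lemma jump_indicator_series_simple_level:
  assumes "simple_level V x"
  shows "(\<lambda>i. jump_indicator (jump_enum i) x) sums
           (\<Sum>\<tau>\<in>crossing_times V x \<inter> {0<..t}. of_bool (x < V \<tau>) - of_bool (x < vleft V \<tau>))"
    and "summable (\<lambda>i. \<bar>jump_indicator (jump_enum i) x\<bar>)"
proof -
  define K where "K = crossing_times V x \<inter> {0<..t}"
  define F where "F = enumerated_times \<inter> K"
  have "finite K" unfolding K_def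
    by (rule finite_subset[of _ "crossing_times V x \<inter> {0..t}"]) (use assms in \<open>auto simp: simple_level_def\<close>)
  hence "finite F" by (simp add: F_def)
  have jump: "jump_indicator s x = of_bool (x < V s) - of_bool (x < vleft V s)" if "s \<in> {0<..t}" for s
    using jump_indicator_simple_level[OF assms] that by simp
  have zero: "jump_indicator s x = 0" if "s \<in> enumerated_times" "s \<notin> F" for s
  proof (rule ccontr)
    assume "jump_indicator s x \<noteq> 0"
    hence "V s \<noteq> vleft V s" by (auto simp: signed_indicator_def)
    moreover have "s \<in> {0<..t}" using that enumerated_times_subset by auto
    ultimately have "x \<noteq> V s" "x \<noteq> vleft V s" using assms by (auto simp: simple_level_def)
    hence "s \<in> K"
      using \<open>jump_indicator s x \<noteq> 0\<close> jump[OF \<open>s \<in> {0<..t}\<close>] \<open>s \<in> {0<..t}\<close>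
      by (auto simp: K_def crossing_times_def split: if_splits)
    thus False using that by (simp add: F_def)
  qed
  have "(\<Sum>\<tau>\<in>K. of_bool (x < V \<tau>) - of_bool (x < vleft V \<tau>)) = (\<Sum>\<tau>\<in>F. jump_indicator \<tau> x)"
  proof (rule sum.mono_neutral_cong_right[OF \<open>finite K\<close>])
    show "F \<subseteq> K" by (simp add: F_def)
    show "\<forall>\<tau>\<in>K - F. of_bool (x < V \<tau>) - of_bool (x < vleft V \<tau>) = (0::real)"
      by (auto simp: F_def K_def enumerated_times_def)
    show "of_bool (x < V \<tau>) - of_bool (x < vleft V \<tau>) = jump_indicator \<tau> x" if "\<tau> \<in> F" for \<tau>
      using jump[of \<tau>] that by (simp add: F_def K_def)
  qed
  moreover have "F \<subseteq> enumerated_times" by (simp add: F_def)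
  ultimately show "(\<lambda>i. jump_indicator (jump_enum i) x) sums
      (\<Sum>\<tau>\<in>crossing_times V x \<inter> {0<..t}. of_bool (x < V \<tau>) - of_bool (x < vleft V \<tau>))"
    using sums_bij_finite_support[OF bij_betw_jump_enum \<open>finite F\<close>, of "\<lambda>s. jump_indicator s x"] zero
    unfolding K_def by simp
  show "summable (\<lambda>i. \<bar>jump_indicator (jump_enum i) x\<bar>)"
    using sums_bij_finite_support[OF bij_betw_jump_enum \<open>finite F\<close> \<open>F \<subseteq> enumerated_times\<close>,
        of "\<lambda>s. \<bar>jump_indicator s x\<bar>"] zero by (auto simp: sums_iff)
qed

lemma ell_eq_simple_level:
  assumes "simple_level V x" and "x \<noteq> V 0" and "x \<noteq> V t"
  shows "real_of_int (ell V x t) = signed_indicator (V 0) (V t) x - (\<Sum>i. jump_indicator (jump_enum i) x)"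
proof -
  have no_jump_at: "\<And>\<tau>. \<tau> > 0 \<Longrightarrow> V \<tau> \<noteq> vleft V \<tau> \<Longrightarrow> x \<noteq> V \<tau> \<and> x \<noteq> vleft V \<tau>"
    and finite: "finite (crossing_times V x \<inter> {0..t})"
    using assms(1) by (auto simp: simple_level_def)
  have "net_crossings V x t = of_bool (x < V t) - of_bool (x < V 0)"
    by (rule net_crossings_eq[OF no_jump_at finite]) (use assms t_pos in auto)
  moreover have "(\<Sum>i. jump_indicator (jump_enum i) x) =
      (\<Sum>\<tau>\<in>crossing_times V x \<inter> {0<..t}. of_bool (x < V \<tau>) - of_bool (x < vleft V \<tau>))"
    using jump_indicator_series_simple_level(1)[OF assms(1)] by (rule sums_unique[symmetric])
  ultimately have "ell V x t = (of_bool (x < V t) - of_bool (x < V 0))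
      - (\<Sum>\<tau>\<in>crossing_times V x \<inter> {0<..t}. of_bool (x < V \<tau>) - of_bool (x < vleft V \<tau>))"
    using net_crossings_eq_ell_plus_jumps[OF finite] by simp
  hence "real_of_int (ell V x t) = (of_bool (x < V t) - of_bool (x < V 0))
      - (\<Sum>\<tau>\<in>crossing_times V x \<inter> {0<..t}. of_bool (x < V \<tau>) - of_bool (x < vleft V \<tau>))"
    by (simp add: of_int_sum)
  thus ?thesis
    using \<open>(\<Sum>i. jump_indicator (jump_enum i) x) = _\<close> signed_indicator_eq_of_bool[OF assms(2,3)] by simp
qed

lemma integral_f'_jump_series:
  shows "integrable lborel (\<lambda>x. \<Sum>i. f' x * jump_indicator (jump_enum i) x)"
    and "(\<integral>x. (\<Sum>i. f' x * jump_indicator (jump_enum i) x) \<partial>lborel) =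
      (\<Sum>\<^sub>\<infinity>s\<in>{0<..t}. f (V s) - f (vleft V s))"
proof -
  have ae: "AE x in lborel. summable (\<lambda>i. norm (f' x * jump_indicator (jump_enum i) x))"
    using AE_simple_level
  proof eventually_elim
    case (elim x)
    thus ?case
      using summable_mult[OF jump_indicator_series_simple_level(2)[OF elim], of "\<bar>f' x\<bar>"]
      by (simp add: abs_mult)
  qed
  have "summable (\<lambda>i. \<integral>x. norm (f' x * jump_indicator (jump_enum i) x) \<partial>lborel)"
  proof (rule summable_comparison_test')
    show "summable (\<lambda>i. L * \<bar>V (jump_enum i) - vleft V (jump_enum i)\<bar>)"
      using summable_jump_sizes by (rule summable_mult)
    show "norm (\<integral>x. norm (f' x * jump_indicator (jump_enum i) x) \<partial>lborel)
        \<le> L * \<bar>V (jump_enum i) - vleft V (jump_enum i)\<bar>" for i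
      using integral_norm_jump_indicator_le[OF jump_enum_in] by simp
  qed
  note series = integrable_suminf[OF integral_jump_indicator(1) ae this]
    integral_suminf[OF integral_jump_indicator(1) ae this]
  show "integrable lborel (\<lambda>x. \<Sum>i. f' x * jump_indicator (jump_enum i) x)"
    by (rule series(1))
  show "(\<integral>x. (\<Sum>i. f' x * jump_indicator (jump_enum i) x) \<partial>lborel) =
      (\<Sum>\<^sub>\<infinity>s\<in>{0<..t}. f (V s) - f (vleft V s))"
    unfolding series(2) integral_jump_indicator(2) using jumps_of_f_sums by (rule sums_unique[symmetric])
qed

lemma integrable_jump_series: "integrable lborel (\<lambda>x. \<Sum>i. jump_indicator (jump_enum i) x)"
proof (rule integrable_suminf)
  show "integrable lborel (jump_indicator (jump_enum i))" for i
    using integral_signed_indicator(1)[of "\<lambda>_. 1" "\<lambda>x. x"] by (simp add: DERIV_ident)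
  show "AE x in lborel. summable (\<lambda>i. norm (jump_indicator (jump_enum i) x))"
    using AE_simple_level by eventually_elim (simp add: jump_indicator_series_simple_level(2))
  show "summable (\<lambda>i. \<integral>x. norm (jump_indicator (jump_enum i) x) \<partial>lborel)"
    using summable_jump_sizes by (simp add: integral_abs_signed_indicator(2))
qed

lemma AE_ell_eq:
  "AE x in lborel. simple_level V x \<and>
     real_of_int (ell V x t) = signed_indicator (V 0) (V t) x - (\<Sum>i. jump_indicator (jump_enum i) x)"
proof -
  have "AE x in lborel. x \<notin> {V 0, V t}"
    by (intro AE_not_in countable_imp_null_set_lborel) simp
  with AE_simple_level show ?thesis
    by eventually_elim (simp add: ell_eq_simple_level)
qed

lemma borel_measurable_ell: "(\<lambda>x. real_of_int (ell V x t)) \<in> borel_measurable lebesgue"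
proof -
  have "(\<lambda>x. signed_indicator (V 0) (V t) x - (\<Sum>i. jump_indicator (jump_enum i) x)) \<in> borel_measurable lborel"
    using borel_measurable_signed_indicator borel_measurable_integrable[OF integrable_jump_series]
    by measurable
  moreover have "AE x in lebesgue.
      signed_indicator (V 0) (V t) x - (\<Sum>i. jump_indicator (jump_enum i) x) = real_of_int (ell V x t)"
    using AE_ell_eq by (rule AE_completion[OF eventually_mono]) simp
  ultimately show ?thesis by (rule borel_measurable_AE[OF measurable_completion])
qed

lemma change_of_variables_formula:
  shows "integrable lebesgue (\<lambda>x. f' x * real_of_int (ell V x t))"
    and "f (V t) - f (V 0) = (\<integral>x. f' x * real_of_int (ell V x t) \<partial>lebesgue)
           + (\<Sum>\<^sub>\<infinity>s\<in>{0<..t}. f (V s) - f (vleft V s))"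
proof -
  define \<Phi> where "\<Phi> x = f' x * signed_indicator (V 0) (V t) x - (\<Sum>i. f' x * jump_indicator (jump_enum i) x)" for x
  have "integrable lborel \<Phi>"
    unfolding \<Phi>_def using integral_signed_indicator(1)[OF f'_cont f_deriv] integral_f'_jump_series(1)
    by (rule Bochner_Integration.integrable_diff)
  hence \<Phi>_borel: "\<Phi> \<in> borel_measurable lborel" by (rule borel_measurable_integrable)
  hence \<Phi>_meas: "\<Phi> \<in> borel_measurable lebesgue" by (rule measurable_completion)
  have "f' \<in> borel_measurable lebesgue"
    using borel_measurable_continuous_onI[OF f'_cont] by (simp add: measurable_lborel1 measurable_completion)
  hence meas': "(\<lambda>x. f' x * real_of_int (ell V x t)) \<in> borel_measurable lebesgue"
    using borel_measurable_ell by measurable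
  have AE_\<Phi>: "AE x in lebesgue. \<Phi> x = f' x * real_of_int (ell V x t)"
  proof (rule AE_completion)
    show "AE x in lborel. \<Phi> x = f' x * real_of_int (ell V x t)"
      using AE_ell_eq
    proof eventually_elim
      case (elim x)
      have "(\<Sum>i. f' x * jump_indicator (jump_enum i) x) = f' x * (\<Sum>i. jump_indicator (jump_enum i) x)"
        using jump_indicator_series_simple_level(1)[of x] elim by (intro suminf_mult) (auto simp: sums_iff)
      thus ?case unfolding \<Phi>_def using elim by (simp add: right_diff_distrib)
    qed
  qed
  have "integrable lebesgue \<Phi>"
    using \<open>integrable lborel \<Phi>\<close> integrable_completion[OF \<Phi>_borel] by simp
  thus "integrable lebesgue (\<lambda>x. f' x * real_of_int (ell V x t))"
    using integrable_cong_AE[OF \<Phi>_meas meas' AE_\<Phi>] by simp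
  have "(\<integral>x. f' x * real_of_int (ell V x t) \<partial>lebesgue) = (\<integral>x. \<Phi> x \<partial>lebesgue)"
    by (rule integral_cong_AE[OF meas' \<Phi>_meas]) (use AE_\<Phi> in auto)
  also have "\<dots> = (\<integral>x. \<Phi> x \<partial>lborel)" by (rule integral_completion[OF \<Phi>_borel])
  also have "\<dots> = f (V t) - f (V 0) - (\<Sum>\<^sub>\<infinity>s\<in>{0<..t}. f (V s) - f (vleft V s))"
    unfolding \<Phi>_def
    using integral_signed_indicator[OF f'_cont f_deriv] integral_f'_jump_series
    by (subst Bochner_Integration.integral_diff) auto
  finally show "f (V t) - f (V 0) = (\<integral>x. f' x * real_of_int (ell V x t) \<partial>lebesgue)
           + (\<Sum>\<^sub>\<infinity>s\<in>{0<..t}. f (V s) - f (vleft V s))" by simp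
qed

end

theorem proposition2:
  fixes V f f' :: "real \<Rightarrow> real" and t :: real
  assumes "cadlag V" and "finite_variation V"
    and "\<And>x. (f has_real_derivative f' x) (at x)" and "continuous_on UNIV f'"
    and "t > 0"
  shows "(\<forall>x. simple_level V x \<longrightarrow> finite (upcross_set V x t) \<and> finite (downcross_set V x t))
    \<and> (AE x in lebesgue. simple_level V x)
    \<and> (\<lambda>x. real_of_int (ell V x t)) \<in> borel_measurable lebesgue
    \<and> integrable lebesgue (\<lambda>x. f' x * real_of_int (ell V x t))
    \<and> (\<lambda>s. f (V s) - f (vleft V s)) summable_on {0<..t}
    \<and> f (V t) - f (V 0) =
        (\<integral>x. f' x * real_of_int (ell V x t) \<partial>lebesgue)
        + (\<Sum>\<^sub>\<infinity>s\<in>{0<..t}. f (V s) - f (vleft V s))"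
proof -
  interpret finite_variation_path V
    using assms(1,2) by unfold_locales
  obtain M where M: "\<And>s. 0 \<le> s \<Longrightarrow> s \<le> t \<Longrightarrow> \<bar>V s\<bar> \<le> M"
    using bounded_on_interval[of t] assms(5) by auto
  have "compact (f' ` {-M..M})"
    using assms(4) by (intro compact_continuous_image) (auto intro: continuous_on_subset)
  then obtain L where "\<And>y. y \<in> f' ` {-M..M} \<Longrightarrow> norm y \<le> L"
    by (meson bounded_iff compact_imp_bounded)
  hence "\<And>y. \<bar>y\<bar> \<le> M \<Longrightarrow> \<bar>f' y\<bar> \<le> L" by (simp add: abs_le_iff)
  then interpret change_of_variables V f f' t M L
    using assms(3-5) M by unfold_locales
  show ?thesis
    using finite_upcross_downcross_sets AE_completion[OF AE_simple_level] borel_measurable_ell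
      change_of_variables_formula jumps_of_f_summable_on by blast
qed

end
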